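(* Let $\mu\ge 2$ be an integer. For a prime $p$ and integer $r\ge 1$ set $$\mathrm{weight}(p,r)=\log_2 I_{1/p}(r-1,\mu)-\log_2 I_{1/p}(r,\mu),\qquad \mathrm{density}(p,r)=\frac{\log_2 p}{\mathrm{weight}(p,r)}.$$ Then for every fixed prime $p$, $\mathrm{density}(p,r)$ is decreasing in $r\ge 1$, and $\mathrm{density}(p,1)=\dfrac{\ln p}{-\ln\big(1-(1-1/p)^\mu\big)}$ is non-increasing as a function of the prime $p$.
   Context: For $\epsilon\in(0,1)$ and integers $k\ge 0$, $\mu\ge 1$, the regularized (incomplete) beta function is $I_\epsilon(k,\mu)=(1-\epsilon)^\mu\sum_{j=k}^{\infty}\binom{\mu+j-1}{j}\epsilon^j$; in particular $I_\epsilon(0,\mu)=1$ and $I_\epsilon(1,\mu)=1-(1-\epsilon)^\mu$. *)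

theory Defs
  imports Complex_Main "HOL-Computational_Algebra.Primes"
begin

text \<open>Regularized incomplete beta function (negative-binomial tail form):
  I_eps(k,mu) = (1-eps)^mu * sum_{j>=k} binom(mu+j-1, j) eps^j.\<close>
definition incBeta :: "real \<Rightarrow> nat \<Rightarrow> nat \<Rightarrow> real" where
  "incBeta \<epsilon> k \<mu> = (1 - \<epsilon>) ^ \<mu> * (\<Sum>i. real ((\<mu> + (i + k) - 1) choose (i + k)) * \<epsilon> ^ (i + k))"

definition weight :: "nat \<Rightarrow> nat \<Rightarrow> nat \<Rightarrow> real" where
  "weight \<mu> p r = log 2 (incBeta (1 / real p) (r - 1) \<mu>) - log 2 (incBeta (1 / real p) r \<mu>)"

definition density :: "nat \<Rightarrow> nat \<Rightarrow> nat \<Rightarrow> real" where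
  "density \<mu> p r = log 2 (real p) / weight \<mu> p r"

end

theory Submission
  imports Defs "HOL-Analysis.Generalised_Binomial_Theorem" "HOL-Analysis.Convex"
begin

text \<open>Write \<open>e = 1/p\<close> and \<open>T k = \<Sum>\<^sub>j\<^sub>\<ge>\<^sub>k a j\<close> for the negative binomial coefficients
  \<open>a j = C(\<mu>+j-1, j) e\<^sup>j\<close>, so that \<open>I\<^sub>e(k,\<mu>) = (1-e)\<^sup>\<mu> T k\<close> and the weight is
  \<open>log\<^sub>2 (T (r-1) / T r)\<close>. For \<open>\<mu> \<ge> 2\<close> the ratios \<open>a (j+1) / a j = (\<mu>+j) e / (j+1)\<close> strictly
  decrease, hence so do the ratios \<open>T (k+1) / T k\<close> of the tails; thus the weight strictly
  increases in \<open>r\<close> and the density strictly decreases.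
  At \<open>r = 1\<close> the weight is \<open>\<phi>(ln p) / ln 2\<close> with \<open>\<phi>(t) = -ln (1 - (1 - e\<^sup>-\<^sup>t)\<^sup>\<mu>)\<close>. This
  \<open>\<phi>\<close> is convex on \<open>[0,\<infinity>)\<close> with \<open>\<phi>(0) = 0\<close>, so \<open>\<phi>(t)/t\<close> is non-decreasing and the density
  \<open>t / \<phi>(t)\<close> at \<open>t = ln p\<close> is non-increasing in \<open>p\<close>.\<close>

lemma tail_log_concave:
  fixes a :: "nat \<Rightarrow> real"
  assumes summable: "summable a"
    and ratio_decreasing: "\<And>n m. n < m \<Longrightarrow> a (Suc m) * a n < a m * a (Suc n)"
  shows "(\<Sum>i. a (i + n)) * (\<Sum>i. a (i + Suc (Suc n))) < (\<Sum>i. a (i + Suc n))\<^sup>2"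
proof -
  define T where "T k = (\<Sum>i. a (i + k))" for k
  have summable_tail: "summable (\<lambda>i. a (i + k))" for k
    using summable by (simp add: summable_iff_shift)
  have T_split: "T k = a k + T (Suc k)" for k
    using suminf_split_head[OF summable_tail[of k]] by (simp add: T_def)
  have "0 < (\<Sum>i. a (Suc n) * a (i + Suc n) - a n * a (i + Suc (Suc n)))"
  proof (rule suminf_pos)
    show "summable (\<lambda>i. a (Suc n) * a (i + Suc n) - a n * a (i + Suc (Suc n)))"
      by (intro summable_diff summable_mult summable_tail)
    show "0 < a (Suc n) * a (i + Suc n) - a n * a (i + Suc (Suc n))" for i
      using ratio_decreasing[of n "i + Suc n"] by (simp add: mult.commute)
  qed
  also have "\<dots> = (\<Sum>i. a (Suc n) * a (i + Suc n)) - (\<Sum>i. a n * a (i + Suc (Suc n)))"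
    by (intro suminf_diff[symmetric] summable_mult summable_tail)
  also have "\<dots> = a (Suc n) * T (Suc n) - a n * T (Suc (Suc n))"
    by (simp only: T_def suminf_mult[OF summable_tail])
  finally have key: "a n * T (Suc (Suc n)) < a (Suc n) * T (Suc n)"
    by simp
  have "T n * T (Suc (Suc n)) = a n * T (Suc (Suc n)) + T (Suc n) * T (Suc (Suc n))"
    by (simp add: T_split[of n] algebra_simps)
  also have "\<dots> < a (Suc n) * T (Suc n) + T (Suc n) * T (Suc (Suc n))"
    using key by simp
  also have "\<dots> = (T (Suc n))\<^sup>2"
    by (simp add: T_split[of "Suc n"] power2_eq_square algebra_simps)
  finally show ?thesis
    by (simp add: T_def)
qed

lemma convex_on_ratio_mono:
  fixes f :: "real \<Rightarrow> real"
  assumes "convex_on {0..} f" "f 0 = 0" "0 < s" "s \<le> t"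
  shows "f s / s \<le> f t / t"
proof (cases "s = t")
  case False
  then have "(f 0 - f s) / (0 - s) \<le> (f 0 - f t) / (0 - t)"
    using assms by (intro convex_on_slope_le) auto
  then show ?thesis
    using assms by simp
qed simp

definition negbin_coeff :: "nat \<Rightarrow> real \<Rightarrow> nat \<Rightarrow> real" where
  "negbin_coeff \<mu> e j = real ((\<mu> + j - 1) choose j) * e ^ j"

definition negbin_tail :: "nat \<Rightarrow> real \<Rightarrow> nat \<Rightarrow> real" where
  "negbin_tail \<mu> e k = (\<Sum>i. negbin_coeff \<mu> e (i + k))"

lemma incBeta_eq_negbin_tail: "incBeta e k \<mu> = (1 - e) ^ \<mu> * negbin_tail \<mu> e k"
  unfolding incBeta_def negbin_tail_def negbin_coeff_def ..

lemma negbin_coeff_sums: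
  assumes "\<mu> \<ge> 1" "\<bar>e\<bar> < 1"
  shows "negbin_coeff \<mu> e sums (1 / (1 - e) ^ \<mu>)"
proof -
  have coeff: "(- real \<mu> gchoose n) * (-e) ^ n = negbin_coeff \<mu> e n" for n
  proof -
    have "(- real \<mu> gchoose n) * (-e) ^ n
        = ((-1) ^ n * (-1) ^ n) * (((real \<mu> + real n - 1) gchoose n) * e ^ n)"
      by (simp only: gbinomial_minus[of "real \<mu>"] power_minus[of e] mult_ac)
    also have "\<dots> = negbin_coeff \<mu> e n"
      using assms(1)
      by (simp add: negbin_coeff_def binomial_gbinomial of_nat_diff flip: power_mult_distrib)
    finally show ?thesis .
  qed
  have "(\<lambda>n. (- real \<mu> gchoose n) * (-e) ^ n) sums (1 + - e) powr (- real \<mu>)"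
    using assms(2) by (intro gen_binomial_real) simp
  also have "(1 + - e) powr (- real \<mu>) = 1 / (1 - e) ^ \<mu>"
    using assms(2) by (simp add: powr_minus powr_realpow divide_inverse)
  finally show ?thesis
    by (simp only: coeff)
qed

lemma negbin_coeff_pos: "\<mu> \<ge> 1 \<Longrightarrow> 0 < e \<Longrightarrow> 0 < negbin_coeff \<mu> e j"
  by (simp add: negbin_coeff_def zero_less_binomial_iff)

lemma negbin_coeff_Suc:
  assumes "\<mu> \<ge> 1"
  shows "negbin_coeff \<mu> e (Suc j) = negbin_coeff \<mu> e j * e * (real \<mu> + j) / (j + 1)"
proof -
  have "Suc (\<mu> + j - 1) = \<mu> + Suc j - 1" "Suc (\<mu> + j - 1) = \<mu> + j"
    using assms by auto
  then have "real (Suc j) * real ((\<mu> + Suc j - 1) choose Suc j) = real (\<mu> + j) * real ((\<mu> + j - 1) choose j)"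
    using arg_cong[OF Suc_times_binomial[of j "\<mu> + j - 1"], of real] by (simp only: of_nat_mult)
  then show ?thesis
    unfolding negbin_coeff_def by (simp add: field_simps)
qed

lemma negbin_coeff_ratio_decreasing:
  assumes "\<mu> \<ge> 2" "0 < e" "n < m"
  shows "negbin_coeff \<mu> e (Suc m) * negbin_coeff \<mu> e n < negbin_coeff \<mu> e m * negbin_coeff \<mu> e (Suc n)"
proof -
  have "(real \<mu> - 1) * n < (real \<mu> - 1) * m"
    using assms by (intro mult_strict_left_mono) auto
  then have "(real \<mu> + m) / (m + 1) < (real \<mu> + n) / (n + 1)"
    by (simp add: field_simps)
  moreover have "0 < negbin_coeff \<mu> e m * negbin_coeff \<mu> e n * e"
    using assms by (simp add: negbin_coeff_pos)
  ultimately have "negbin_coeff \<mu> e m * negbin_coeff \<mu> e n * e * ((real \<mu> + m) / (m + 1))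
      < negbin_coeff \<mu> e m * negbin_coeff \<mu> e n * e * ((real \<mu> + n) / (n + 1))"
    by (rule mult_strict_left_mono)
  moreover have "negbin_coeff \<mu> e (Suc k) = negbin_coeff \<mu> e k * e * ((real \<mu> + k) / (k + 1))" for k
    using negbin_coeff_Suc[of \<mu> e k] assms(1) by simp
  ultimately show ?thesis
    by (simp only: ac_simps)
qed

lemma negbin_tail_0:
  assumes "\<mu> \<ge> 1" "\<bar>e\<bar> < 1"
  shows "negbin_tail \<mu> e 0 = 1 / (1 - e) ^ \<mu>"
  using negbin_coeff_sums[OF assms] by (simp add: negbin_tail_def sums_iff)

lemma summable_negbin_coeff_shift:
  assumes "\<mu> \<ge> 1" "\<bar>e\<bar> < 1"
  shows "summable (\<lambda>i. negbin_coeff \<mu> e (i + k))"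
  using negbin_coeff_sums[OF assms] by (simp add: summable_iff_shift sums_summable)

lemma negbin_tail_split:
  assumes "\<mu> \<ge> 1" "\<bar>e\<bar> < 1"
  shows "negbin_tail \<mu> e k = negbin_coeff \<mu> e k + negbin_tail \<mu> e (Suc k)"
  using suminf_split_head[OF summable_negbin_coeff_shift[OF assms, of k]]
  by (simp add: negbin_tail_def)

lemma negbin_tail_pos:
  assumes "\<mu> \<ge> 1" "0 < e" "e < 1"
  shows "0 < negbin_tail \<mu> e k"
  unfolding negbin_tail_def using assms
  by (intro suminf_pos summable_negbin_coeff_shift negbin_coeff_pos) auto

lemma negbin_tail_log_concave:
  assumes "\<mu> \<ge> 2" "0 < e" "e < 1"
  shows "negbin_tail \<mu> e n * negbin_tail \<mu> e (Suc (Suc n)) < (negbin_tail \<mu> e (Suc n))\<^sup>2"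
  unfolding negbin_tail_def using assms
  by (intro tail_log_concave negbin_coeff_ratio_decreasing sums_summable[OF negbin_coeff_sums]) auto

lemma weight_eq_ln_negbin_tail:
  assumes "\<mu> \<ge> 1" "1 < p"
  shows "weight \<mu> p r
    = (ln (negbin_tail \<mu> (1 / p) (r - 1)) - ln (negbin_tail \<mu> (1 / p) r)) / ln 2"
proof -
  define e where "e = 1 / real p"
  have e: "0 < e" "e < 1"
    using assms(2) by (auto simp: e_def)
  have "ln (incBeta e k \<mu>) = ln ((1 - e) ^ \<mu>) + ln (negbin_tail \<mu> e k)" for k
    unfolding incBeta_eq_negbin_tail using e negbin_tail_pos[OF assms(1) e]
    by (intro ln_mult_pos) auto
  then show ?thesis
    by (simp add: weight_def log_def flip: e_def diff_divide_distrib)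
qed

lemma weight_pos:
  assumes "\<mu> \<ge> 1" "1 < p" "1 \<le> r"
  shows "0 < weight \<mu> p r"
proof -
  define T where "T = negbin_tail \<mu> (1 / p)"
  have e: "0 < 1 / real p" "1 / real p < 1"
    using assms(2) by auto
  have "T r < T (r - 1)"
    using negbin_tail_split[OF assms(1), of "1 / p" "r - 1"] negbin_coeff_pos[OF assms(1) e(1)] e assms(3)
    by (simp add: T_def)
  then have "ln (T r) < ln (T (r - 1))"
    using negbin_tail_pos[OF assms(1) e] by (simp add: T_def)
  then show ?thesis
    by (simp add: weight_eq_ln_negbin_tail[OF assms(1,2)] flip: T_def)
qed

lemma weight_less_weight_Suc:
  assumes "\<mu> \<ge> 2" "1 < p" "1 \<le> r"
  shows "weight \<mu> p r < weight \<mu> p (Suc r)"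
proof -
  define T where "T = negbin_tail \<mu> (1 / p)"
  have e: "0 < 1 / real p" "1 / real p < 1"
    using assms(2) by auto
  have T_pos: "0 < T k" for k
    using negbin_tail_pos[OF _ e] assms(1) by (simp add: T_def)
  have "T (r - 1) * T (Suc r) < T r * T r"
    using negbin_tail_log_concave[OF assms(1) e, of "r - 1"] assms(3)
    by (simp add: T_def power2_eq_square Suc_diff_le)
  then have "ln (T (r - 1) * T (Suc r)) < ln (T r * T r)"
    using T_pos by simp
  then have "ln (T (r - 1)) - ln (T r) < ln (T (Suc r - 1)) - ln (T (Suc r))"
    unfolding ln_mult_pos[OF T_pos T_pos] by simp
  then show ?thesis
    using assms(1) by (simp add: weight_eq_ln_negbin_tail[OF _ assms(2)] divide_strict_right_mono flip: T_def)
qed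

lemma density_strict_antimono:
  assumes "\<mu> \<ge> 2" "1 < p" "1 \<le> r" "r < r'"
  shows "density \<mu> p r' < density \<mu> p r"
proof -
  have "weight \<mu> p (Suc m) < weight \<mu> p (Suc n)" if "m < n" for m n
    using lift_Suc_mono_less[of "\<lambda>k. weight \<mu> p (Suc k)", OF _ that]
      weight_less_weight_Suc[OF assms(1,2)] by simp
  from this[of "r - 1" "r' - 1"] have "weight \<mu> p r < weight \<mu> p r'"
    using assms(3,4) by simp
  moreover have "0 < weight \<mu> p r"
    using assms by (intro weight_pos) auto
  moreover have "0 < log 2 (real p)"
    using assms(2) by simp
  ultimately show ?thesis
    unfolding density_def by (intro divide_strict_left_mono) auto
qed

lemma density_one:
  assumes "\<mu> \<ge> 1" "1 < p"
  shows "density \<mu> p 1 = ln (real p) / - ln (1 - (1 - 1 / real p) ^ \<mu>)"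
proof -
  define e where "e = 1 / real p"
  have e: "\<bar>e\<bar> < 1" "e \<noteq> 1"
    using assms(2) by (auto simp: e_def)
  have "incBeta e 0 \<mu> = 1"
    using negbin_tail_0[OF assms(1) e(1)] e(2) by (simp add: incBeta_eq_negbin_tail)
  moreover have "incBeta e 1 \<mu> = 1 - (1 - e) ^ \<mu>"
    using negbin_tail_split[OF assms(1) e(1), of 0] negbin_tail_0[OF assms(1) e(1)] e(2)
    by (simp add: incBeta_eq_negbin_tail negbin_coeff_def field_simps)
  ultimately show ?thesis
    by (simp add: density_def weight_def log_def flip: e_def)
qed

text \<open>\<open>weight1_ln \<mu> (ln p) = ln 2 * weight \<mu> p 1\<close>; its derivative at \<open>t\<close> is
  \<open>weight1_ln_deriv \<mu> (1 - exp (-t))\<close>.\<close>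

definition weight1_ln :: "nat \<Rightarrow> real \<Rightarrow> real" where
  "weight1_ln \<mu> t = - ln (1 - (1 - exp (- t)) ^ \<mu>)"

definition weight1_ln_deriv :: "nat \<Rightarrow> real \<Rightarrow> real" where
  "weight1_ln_deriv \<mu> v = real \<mu> * v ^ (\<mu> - 1) / (\<Sum>k<\<mu>. v ^ k)"

lemma sum_powers_ge_one:
  fixes v :: real
  assumes "\<mu> \<ge> 1" "0 \<le> v"
  shows "1 \<le> (\<Sum>k<\<mu>. v ^ k)"
proof -
  have "(\<Sum>k<\<mu>. v ^ k) = v ^ 0 + (\<Sum>k\<in>{..<\<mu>} - {0}. v ^ k)"
    using assms(1) by (intro sum.remove) auto
  moreover have "0 \<le> (\<Sum>k\<in>{..<\<mu>} - {0}. v ^ k)"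
    using assms(2) by (simp add: sum_nonneg)
  ultimately show ?thesis
    by simp
qed

lemma weight1_ln_deriv_mono:
  assumes "\<mu> \<ge> 1" "0 \<le> v" "v \<le> w"
  shows "weight1_ln_deriv \<mu> v \<le> weight1_ln_deriv \<mu> w"
proof -
  have "v ^ (\<mu> - 1) * (\<Sum>k<\<mu>. w ^ k) \<le> w ^ (\<mu> - 1) * (\<Sum>k<\<mu>. v ^ k)"
    unfolding sum_distrib_left
  proof (rule sum_mono)
    fix k assume "k \<in> {..<\<mu>}"
    then have k: "\<mu> - 1 = k + (\<mu> - 1 - k)"
      by auto
    have "v ^ (\<mu> - 1) * w ^ k = (v ^ k * w ^ k) * v ^ (\<mu> - 1 - k)"
      by (subst k) (simp add: power_add)
    also have "\<dots> \<le> (v ^ k * w ^ k) * w ^ (\<mu> - 1 - k)"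
      using assms by (intro mult_left_mono power_mono) auto
    also have "\<dots> = w ^ (\<mu> - 1) * v ^ k"
      by (subst k) (simp add: power_add)
    finally show "v ^ (\<mu> - 1) * w ^ k \<le> w ^ (\<mu> - 1) * v ^ k" .
  qed
  moreover have "1 \<le> (\<Sum>k<\<mu>. v ^ k)" "1 \<le> (\<Sum>k<\<mu>. w ^ k)"
    using assms by (auto intro: sum_powers_ge_one)
  ultimately show ?thesis
    unfolding weight1_ln_deriv_def by (simp add: divide_simps mult.assoc mult_left_mono)
qed

lemma weight1_ln_has_derivative:
  assumes "\<mu> \<ge> 1" "0 \<le> t"
  shows "(weight1_ln \<mu> has_real_derivative weight1_ln_deriv \<mu> (1 - exp (- t))) (at t)"
proof -
  define v where "v = 1 - exp (- t)"
  have v: "0 \<le> v" "v < 1"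
    using assms(2) by (auto simp: v_def)
  have "v ^ \<mu> < 1"
    using v assms(1) by (simp add: power_less_one_iff)
  \<comment> \<open>the derivative exactly as \<open>derivative_eq_intros\<close> assembles it\<close>
  have "(weight1_ln \<mu> has_real_derivative
      - (- (real \<mu> * (1 - exp (- t)) ^ (\<mu> - 1) * (- (exp (- t) * (- 1))))) / (1 - (1 - exp (- t)) ^ \<mu>)) (at t)"
    unfolding weight1_ln_def by (rule derivative_eq_intros refl | use \<open>v ^ \<mu> < 1\<close> v_def in simp)+
  moreover have "exp (- t) = 1 - v"
    by (simp add: v_def)
  moreover have "1 - v ^ \<mu> = (1 - v) * (\<Sum>k<\<mu>. v ^ k)"
    by (rule one_diff_power_eq)
  ultimately show ?thesis
    using v by (simp add: weight1_ln_deriv_def divide_simps flip: v_def)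
qed

lemma weight1_ln_convex: "\<mu> \<ge> 1 \<Longrightarrow> convex_on {0..} (weight1_ln \<mu>)"
  by (intro convex_on_realI[where f' = "\<lambda>t. weight1_ln_deriv \<mu> (1 - exp (- t))"]
        weight1_ln_has_derivative weight1_ln_deriv_mono) auto

lemma weight1_ln_pos:
  assumes "\<mu> \<ge> 1" "0 < t"
  shows "0 < weight1_ln \<mu> t"
proof -
  have "0 < 1 - exp (- t)" "1 - exp (- t) < 1"
    using assms(2) by auto
  then have "(1 - exp (- t)) ^ \<mu> < 1" "0 < (1 - exp (- t)) ^ \<mu>"
    using assms(1) by (simp_all add: power_less_one_iff)
  then show ?thesis
    by (simp add: weight1_ln_def)
qed

lemma density_one_antimono:
  assumes "\<mu> \<ge> 1" "1 < p" "p \<le> q"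
  shows "density \<mu> q 1 \<le> density \<mu> p 1"
proof -
  have density_one_eq: "density \<mu> n 1 = ln n / weight1_ln \<mu> (ln n)" if "1 < n" for n
    using density_one[OF assms(1) that] that by (simp add: weight1_ln_def exp_minus inverse_eq_divide)
  have "weight1_ln \<mu> (ln p) / ln p \<le> weight1_ln \<mu> (ln q) / ln q"
    using assms by (intro convex_on_ratio_mono weight1_ln_convex) (auto simp: weight1_ln_def power_0_left)
  moreover have "0 < weight1_ln \<mu> (ln p)" "0 < weight1_ln \<mu> (ln q)"
    using assms by (auto intro: weight1_ln_pos)
  moreover have "0 < ln (real p)" "0 < ln (real q)"
    using assms by auto
  ultimately show ?thesis
    unfolding density_one_eq[OF assms(2)] density_one_eq[OF less_le_trans[OF assms(2,3)]]
    by (simp add: divide_simps mult.commute)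
qed

theorem mainTheorem10:
  fixes \<mu> :: nat
  assumes "\<mu> \<ge> 2"
  shows "(\<forall>p r r'. prime p \<and> 1 \<le> r \<and> r < r' \<longrightarrow> density \<mu> p r' < density \<mu> p r)
       \<and> (\<forall>p. prime p \<longrightarrow> density \<mu> p 1 = ln (real p) / - ln (1 - (1 - 1 / real p) ^ \<mu>))
       \<and> (\<forall>p q. prime p \<and> prime q \<and> p \<le> q \<longrightarrow> density \<mu> q 1 \<le> density \<mu> p 1)"
proof (intro conjI allI impI)
  fix p r r' :: nat
  assume "prime p \<and> 1 \<le> r \<and> r < r'"
  then show "density \<mu> p r' < density \<mu> p r"
    using assms prime_gt_1_nat[of p] by (intro density_strict_antimono) auto
next
  fix p :: nat
  assume "prime p"
  then show "density \<mu> p 1 = ln (real p) / - ln (1 - (1 - 1 / real p) ^ \<mu>)"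
    using assms prime_gt_1_nat[of p] by (intro density_one) auto
next
  fix p q :: nat
  assume "prime p \<and> prime q \<and> p \<le> q"
  then show "density \<mu> q 1 \<le> density \<mu> p 1"
    using assms prime_gt_1_nat[of p] by (intro density_one_antimono) auto
qed

end
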